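(* Let $p\ge 2$ be an integer and let $C_p(n)=\frac{(pn)!}{((p-1)n+1)!\,n!}=\frac{1}{(p-1)n+1}\binom{pn}{n}$ be the Fuss–Catalan numbers. Then the sequence $\{C_p(n)\}_{n\geq0}$ is infinitely log-monotonic.
   Context: For a sequence $\{z_n\}$ of positive numbers, define the operator $R\{z_n\}=\{z_{n+1}/z_n\}$. A sequence of positive numbers $\{x_n\}$ is log-convex if $x_{n-1}x_{n+1}\ge x_n^2$ and log-concave if $x_{n-1}x_{n+1}\le x_n^2$, for all indices where these terms are defined. A sequence $\{z_n\}$ is log-monotonic of order $k$ if for every odd $r\le k-1$ the sequence $R^r\{z_n\}$ is log-concave and for every even $r\le k-1$ (including $r=0$) the sequence $R^r\{z_n\}$ is log-convex. It is infinitely log-monotonic if it is log-monotonic of order $k$ for every integer $k\ge0$. *)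

theory Defs
  imports Complex_Main
begin

definition ratio_op :: "(nat \<Rightarrow> real) \<Rightarrow> (nat \<Rightarrow> real)" ("R") where
  "ratio_op z = (\<lambda>n. z (Suc n) / z n)"

definition log_convex :: "(nat \<Rightarrow> real) \<Rightarrow> bool" where
  "log_convex x \<longleftrightarrow> (\<forall>n\<ge>1. x (n - 1) * x (n + 1) \<ge> (x n)^2)"

definition log_concave :: "(nat \<Rightarrow> real) \<Rightarrow> bool" where
  "log_concave x \<longleftrightarrow> (\<forall>n\<ge>1. x (n - 1) * x (n + 1) \<le> (x n)^2)"

definition log_monotonic_order :: "nat \<Rightarrow> (nat \<Rightarrow> real) \<Rightarrow> bool" where
  "log_monotonic_order k z \<longleftrightarrow>
     (\<forall>r. r + 1 \<le> k \<longrightarrow>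
        (odd r \<longrightarrow> log_concave ((ratio_op ^^ r) z)) \<and>
        (even r \<longrightarrow> log_convex ((ratio_op ^^ r) z)))"

definition infinitely_log_monotonic :: "(nat \<Rightarrow> real) \<Rightarrow> bool" where
  "infinitely_log_monotonic z \<longleftrightarrow> (\<forall>k. log_monotonic_order k z)"

definition fuss_catalan :: "nat \<Rightarrow> nat \<Rightarrow> real" where
  "fuss_catalan p n = real (fact (p * n)) / (real (fact ((p - 1) * n + 1)) * real (fact n))"

end

theory Submission
  imports Defs
begin

text \<open>Write \<open>C\<^sub>p(n) = exp (a n)\<close>. Then \<open>R\<close> turns into the forward difference,
  \<open>R\<^sup>r C\<^sub>p = exp (\<Delta>\<^sup>r a)\<close>, so infinite log-monotonicity amounts to
  \<open>(-1)\<^sup>r \<Delta>\<^sup>r\<^sup>+\<^sup>2 a \<ge> 0\<close>. The increment \<open>\<Delta>a\<close> is the restriction to \<open>\<nat>\<close> of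
  \<open>K + \<Sum>\<^sub>j (ln (x + \<alpha>\<^sub>j) - ln (x + \<beta>\<^sub>j))\<close> with \<open>0 < \<alpha>\<^sub>j \<le> \<beta>\<^sub>j\<close>, and since
  \<open>\<Delta>\<^sup>m ln\<close> has derivative \<open>\<Delta>\<^sup>m (1/x) = (-1)\<^sup>m m! / (x (x+1) \<cdots> (x+m))\<close>, the function
  \<open>(-1)\<^sup>m\<^sup>+\<^sup>1 \<Delta>\<^sup>m ln\<close> is nonincreasing, which fixes the sign of every difference.\<close>

text \<open>One operator for sequences (\<open>x + 1 = Suc x\<close> on \<open>nat\<close>) and for real functions.\<close>

definition forward_diff :: "('a::{plus,one} \<Rightarrow> 'b::minus) \<Rightarrow> 'a \<Rightarrow> 'b" where
  "forward_diff f x = f (x + 1) - f x"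

lemma forward_diff_funpow_Suc:
  "(forward_diff ^^ Suc m) f x = (forward_diff ^^ m) f (x + 1) - (forward_diff ^^ m) f x"
  by (simp add: forward_diff_def)

lemma forward_diff_funpow_of_nat:
  "(forward_diff ^^ k) (\<lambda>n. F (real n)) n = (forward_diff ^^ k) F (real n)"
proof (induction k arbitrary: n)
  case (Suc k)
  then show ?case by (simp only: forward_diff_funpow_Suc) (simp add: add.commute)
qed simp

lemma forward_diff_funpow_diff:
  fixes f g :: "'a::{plus,one} \<Rightarrow> 'b::ab_group_add"
  shows "(forward_diff ^^ m) (\<lambda>x. f x - g x) x = (forward_diff ^^ m) f x - (forward_diff ^^ m) g x"
  by (induction m arbitrary: x) (simp_all only: forward_diff_funpow_Suc funpow_0, simp_all)

lemma forward_diff_funpow_sum: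
  fixes F :: "'i \<Rightarrow> 'a::{plus,one} \<Rightarrow> 'b::ab_group_add"
  shows "(forward_diff ^^ m) (\<lambda>x. \<Sum>j\<in>J. F j x) x = (\<Sum>j\<in>J. (forward_diff ^^ m) (F j) x)"
  by (induction m arbitrary: x) (simp_all only: forward_diff_funpow_Suc funpow_0 sum_subtractf)

lemma forward_diff_funpow_shift:
  fixes f :: "'a::{semigroup_add,ab_semigroup_add,one} \<Rightarrow> 'b::minus"
  shows "(forward_diff ^^ m) (\<lambda>x. f (x + c)) x = (forward_diff ^^ m) f (x + c)"
  by (induction m arbitrary: x) (simp_all only: forward_diff_funpow_Suc funpow_0, simp_all add: ac_simps)

lemma forward_diff_funpow_add_const:
  fixes f :: "'a::{plus,one} \<Rightarrow> 'b::ab_group_add"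
  shows "(forward_diff ^^ Suc m) (\<lambda>x. K + f x) = (forward_diff ^^ Suc m) f"
proof -
  have "forward_diff (\<lambda>x. K + f x) = forward_diff f"
    by (simp add: forward_diff_def fun_eq_iff)
  then show ?thesis
    by (simp only: funpow_Suc_right comp_def)
qed

lemma forward_diff_funpow_inverse:
  fixes x :: real
  assumes "x > 0"
  shows "(forward_diff ^^ m) inverse x = (-1) ^ m * fact m / pochhammer x (Suc m)"
  using assms
proof (induction m arbitrary: x)
  case 0
  then show ?case by (simp add: divide_inverse)
next
  case (Suc m)
  define c :: real where "c = (-1) ^ m * fact m"
  define P where "P = pochhammer x (Suc (Suc m))"
  have "P = x * pochhammer (x + 1) (Suc m)"
    unfolding P_def by (rule pochhammer_rec)
  then have left: "c / pochhammer (x + 1) (Suc m) = c * x / P"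
    using Suc.prems by (simp add: pochhammer_pos)
  have "P = pochhammer x (Suc m) * (x + real (Suc m))"
    unfolding P_def by (rule pochhammer_Suc)
  then have right: "c / pochhammer x (Suc m) = c * (x + real (Suc m)) / P"
    using Suc.prems by (simp add: pochhammer_pos add_pos_nonneg)
  have "(forward_diff ^^ Suc m) inverse x = c * x / P - c * (x + real (Suc m)) / P"
    using Suc.prems by (simp only: forward_diff_funpow_Suc Suc.IH c_def [symmetric] left right)
  also have "\<dots> = (-1) ^ Suc m * fact (Suc m) / P"
    by (simp add: c_def diff_divide_distrib [symmetric] algebra_simps)
  finally show ?case
    unfolding P_def .
qed

lemma forward_diff_funpow_has_derivative:
  assumes "\<And>x. x > 0 \<Longrightarrow> (f has_real_derivative f' x) (at x)" and "x > 0"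
  shows "((forward_diff ^^ m) f has_real_derivative (forward_diff ^^ m) f' x) (at x)"
  using assms(2)
proof (induction m arbitrary: x)
  case 0
  then show ?case using assms(1) by simp
next
  case (Suc m)
  have "((\<lambda>y. (forward_diff ^^ m) f (y + 1)) has_real_derivative (forward_diff ^^ m) f' (x + 1)) (at x)"
    using Suc.IH [of "x + 1"] Suc.prems by (simp add: DERIV_shift)
  from DERIV_diff [OF this Suc.IH [OF Suc.prems]] show ?case
    by (simp only: forward_diff_funpow_Suc)
qed

lemma forward_diff_funpow_ln_alternating_antimono:
  fixes a b :: real
  assumes "0 < a" "a \<le> b"
  shows "(-1) ^ Suc m * (forward_diff ^^ m) ln b \<le> (-1) ^ Suc m * (forward_diff ^^ m) ln a"
proof (rule DERIV_nonpos_imp_nonincreasing [OF assms(2)])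
  fix x assume "a \<le> x" "x \<le> b"
  then have "x > 0" using assms(1) by linarith
  have "((forward_diff ^^ m) ln has_real_derivative (forward_diff ^^ m) inverse x) (at x)"
    by (rule forward_diff_funpow_has_derivative [OF _ \<open>x > 0\<close>]) (rule DERIV_ln)
  moreover have "(-1) ^ Suc m * (forward_diff ^^ m) inverse x = - fact m / pochhammer x (Suc m)"
    using \<open>x > 0\<close> by (simp add: forward_diff_funpow_inverse)
  moreover have "- fact m / pochhammer x (Suc m) \<le> 0"
    using \<open>x > 0\<close> by (simp add: pochhammer_pos less_imp_le)
  ultimately show "\<exists>y. ((\<lambda>x. (-1) ^ Suc m * (forward_diff ^^ m) ln x) has_real_derivative y) (at x) \<and> y \<le> 0"
    by (metis DERIV_cmult)
qed

lemma forward_diff_funpow_sum_ln_ratio_alternating: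
  fixes \<alpha> \<beta> :: "'i \<Rightarrow> real" and x :: real
  assumes "\<And>j. j \<in> J \<Longrightarrow> 0 < \<alpha> j \<and> \<alpha> j \<le> \<beta> j" and "x \<ge> 0"
  shows "0 \<le> (-1) ^ m * (forward_diff ^^ Suc m) (\<lambda>y. K + (\<Sum>j\<in>J. ln (y + \<alpha> j) - ln (y + \<beta> j))) x"
proof -
  have "(-1) ^ m * (forward_diff ^^ Suc m) (\<lambda>y. K + (\<Sum>j\<in>J. ln (y + \<alpha> j) - ln (y + \<beta> j))) x =
      (\<Sum>j\<in>J. (-1) ^ Suc (Suc m) * (forward_diff ^^ Suc m) ln (x + \<alpha> j)
              - (-1) ^ Suc (Suc m) * (forward_diff ^^ Suc m) ln (x + \<beta> j))"
    by (simp only: forward_diff_funpow_add_const forward_diff_funpow_sum forward_diff_funpow_diff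
        forward_diff_funpow_shift) (simp add: sum_distrib_left algebra_simps del: funpow.simps)
  also have "\<dots> \<ge> 0"
    using assms forward_diff_funpow_ln_alternating_antimono [of "x + \<alpha> _" "x + \<beta> _" "Suc m"]
    by (intro sum_nonneg) (simp add: add_nonneg_pos del: power_Suc funpow.simps)
  finally show ?thesis .
qed

lemma ratio_op_funpow_exp:
  "(R ^^ r) (\<lambda>n. exp (c n)) = (\<lambda>n. exp ((forward_diff ^^ r) c n))"
  by (induction r) (simp_all add: ratio_op_def forward_diff_def exp_diff)

lemma log_convex_iff:
  "log_convex x \<longleftrightarrow> (\<forall>n. (x (Suc n))\<^sup>2 \<le> x n * x (Suc (Suc n)))"
  unfolding log_convex_def
proof (intro iffI allI impI)
  fix n :: nat
  assume "n \<ge> 1"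
  then obtain k where "n = Suc k"
    using not0_implies_Suc by force
  moreover assume "\<forall>n. (x (Suc n))\<^sup>2 \<le> x n * x (Suc (Suc n))"
  ultimately show "(x n)\<^sup>2 \<le> x (n - 1) * x (n + 1)"
    by simp
qed (auto elim: allE [where x = "Suc _"])

lemma log_concave_iff:
  "log_concave x \<longleftrightarrow> (\<forall>n. x n * x (Suc (Suc n)) \<le> (x (Suc n))\<^sup>2)"
  unfolding log_concave_def
proof (intro iffI allI impI)
  fix n :: nat
  assume "n \<ge> 1"
  then obtain k where "n = Suc k"
    using not0_implies_Suc by force
  moreover assume "\<forall>n. x n * x (Suc (Suc n)) \<le> (x (Suc n))\<^sup>2"
  ultimately show "x (n - 1) * x (n + 1) \<le> (x n)\<^sup>2"
    by simp
qed (auto elim: allE [where x = "Suc _"])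

lemma forward_diff_funpow_two:
  "(forward_diff ^^ 2) c n = c (Suc (Suc n)) - 2 * c (Suc n) + (c n :: real)"
  by (simp add: forward_diff_def numeral_2_eq_2)

lemma log_convex_exp_iff:
  "log_convex (\<lambda>n. exp (c n)) \<longleftrightarrow> (\<forall>n. 0 \<le> (forward_diff ^^ 2) c n)"
  by (simp add: log_convex_iff forward_diff_funpow_two power2_eq_square flip: exp_add) (simp add: algebra_simps)

lemma log_concave_exp_iff:
  "log_concave (\<lambda>n. exp (c n)) \<longleftrightarrow> (\<forall>n. (forward_diff ^^ 2) c n \<le> 0)"
  by (simp add: log_concave_iff forward_diff_funpow_two power2_eq_square flip: exp_add) (simp add: algebra_simps)

lemma infinitely_log_monotonic_exp:
  assumes "\<And>r n. 0 \<le> (-1) ^ r * (forward_diff ^^ (r + 2)) c n"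
  shows "infinitely_log_monotonic (\<lambda>n. exp (c n))"
  unfolding infinitely_log_monotonic_def log_monotonic_order_def
proof (intro allI impI conjI)
  fix r :: nat
  have second_diff: "(forward_diff ^^ 2) ((forward_diff ^^ r) c) = (forward_diff ^^ (r + 2)) c"
    by (simp only: funpow_add comp_def add.commute [of r])
  show "log_concave ((R ^^ r) (\<lambda>n. exp (c n)))" if "odd r"
    using assms [of r] that
    by (simp add: ratio_op_funpow_exp log_concave_exp_iff second_diff del: funpow.simps)
  show "log_convex ((R ^^ r) (\<lambda>n. exp (c n)))" if "even r"
    using assms [of r] that
    by (simp add: ratio_op_funpow_exp log_convex_exp_iff second_diff del: funpow.simps)
qed

lemma fuss_catalan_pos: "fuss_catalan p n > 0"
  by (simp add: fuss_catalan_def del: fact_Suc)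

lemma ln_fact_add:
  "ln (fact (k + m) :: real) = ln (fact k) + (\<Sum>j<m. ln (real (k + j + 1)))"
proof (induction m)
  case (Suc m)
  have "(fact (k + Suc m) :: real) = real (k + m + 1) * fact (k + m)"
    by simp
  then show ?case
    using Suc.IH by (simp add: ln_mult del: of_nat_add)
qed simp

lemma ln_mult_add:
  fixes c x y :: real
  assumes "c > 0" "x + y / c > 0"
  shows "ln (c * x + y) = ln c + ln (x + y / c)"
proof -
  have "c * x + y = c * (x + y / c)"
    using assms(1) by (simp add: field_simps)
  then show ?thesis
    using assms by (simp add: ln_mult)
qed

lemma ln_fuss_catalan_Suc:
  assumes "q \<ge> 1"
  shows "ln (fuss_catalan (Suc q) (Suc n)) - ln (fuss_catalan (Suc q) n) =
    (real q + 1) * ln (real q + 1) - real q * ln (real q)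
    + (\<Sum>j<q. ln (real n + (real j + 1) / (real q + 1)) - ln (real n + (real j + 2) / real q))"
proof -
  define L :: "nat \<Rightarrow> real" where "L k = ln (fact k)" for k
  have q: "real q > 0"
    using assms by simp
  have ln_fc: "ln (fuss_catalan (Suc q) m) = L (Suc q * m) - L (q * m + 1) - L m" for m
    by (simp add: fuss_catalan_def L_def ln_div ln_mult del: fact_Suc)
  have "L (Suc q * Suc n) = L (Suc q * n) + (\<Sum>j<Suc q. ln (real (Suc q * n + j + 1)))"
    using ln_fact_add [of "Suc q * n" "Suc q"] by (simp add: L_def algebra_simps)
  also have "(\<Sum>j<Suc q. ln (real (Suc q * n + j + 1))) =
      (\<Sum>j<Suc q. ln (real q + 1) + ln (real n + (real j + 1) / (real q + 1)))"
    by (intro sum.cong refl, subst ln_mult_add [symmetric]) (simp_all add: add_nonneg_pos algebra_simps)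
  \<comment> \<open>the term \<open>j = q\<close> is \<open>ln (n + 1)\<close>, which cancels against \<open>n!\<close>\<close>
  finally have numerator: "L (Suc q * Suc n) = L (Suc q * n) + (real q + 1) * ln (real q + 1)
      + (\<Sum>j<q. ln (real n + (real j + 1) / (real q + 1))) + ln (real n + 1)"
    by (simp add: sum.distrib algebra_simps)
  have "L (q * Suc n + 1) = L (q * n + 1) + (\<Sum>j<q. ln (real (q * n + 1 + j + 1)))"
    using ln_fact_add [of "q * n + 1" q] by (simp add: L_def algebra_simps)
  also have "(\<Sum>j<q. ln (real (q * n + 1 + j + 1))) =
      (\<Sum>j<q. ln (real q) + ln (real n + (real j + 2) / real q))"
    using q by (intro sum.cong refl, subst ln_mult_add [symmetric]) (simp_all add: add_nonneg_pos algebra_simps)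
  finally have denominator: "L (q * Suc n + 1) = L (q * n + 1) + real q * ln (real q)
      + (\<Sum>j<q. ln (real n + (real j + 2) / real q))"
    by (simp add: sum.distrib)
  have "L (Suc n) = L n + ln (real n + 1)"
    using ln_fact_add [of n 1] by (simp add: L_def)
  then show ?thesis
    unfolding ln_fc numerator denominator sum_subtractf by simp
qed

theorem corollary3p4:
  fixes p :: nat
  assumes "p \<ge> 2"
  shows "infinitely_log_monotonic (fuss_catalan p)"
proof -
  obtain q where p: "p = Suc q" and q: "q \<ge> 1"
    using assms by (cases p) auto
  define a where "a n = ln (fuss_catalan p n)" for n
  define F where "F y = (real q + 1) * ln (real q + 1) - real q * ln (real q)
    + (\<Sum>j<q. ln (y + (real j + 1) / (real q + 1)) - ln (y + (real j + 2) / real q))" for y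
  have increment: "forward_diff a = (\<lambda>n. F (real n))"
    using ln_fuss_catalan_Suc [OF q] by (simp add: fun_eq_iff forward_diff_def a_def F_def p)
  have "0 \<le> (-1) ^ r * (forward_diff ^^ (r + 2)) a n" for r n
  proof -
    have "(forward_diff ^^ (r + 2)) a n = (forward_diff ^^ Suc r) F (real n)"
      by (simp only: add_2_eq_Suc' funpow_Suc_right [of "Suc r"] comp_def increment
          forward_diff_funpow_of_nat)
    moreover have "(real j + 1) / (real q + 1) \<le> (real j + 2) / real q" for j
      using q by (simp add: field_simps)
    ultimately show ?thesis
      unfolding F_def by (simp only:) (rule forward_diff_funpow_sum_ln_ratio_alternating; simp)
  qed
  moreover have "fuss_catalan p = (\<lambda>n. exp (a n))"
    by (simp add: fun_eq_iff a_def fuss_catalan_pos)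
  ultimately show ?thesis
    using infinitely_log_monotonic_exp by metis
qed

end
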